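(* Let $G=(V,E)$ be a simple undirected graph with $V=[n]$ and let $k\ge1$ be an integer. Let $Y\in\mathbb S^{nk}$, viewed as a $k\times k$ array of $n\times n$ blocks $Y^{rl}$ ($r,l\in[k]$), satisfy $Y^{rr}_{ij}=0$ for all $\{i,j\}\in E$, $r\in[k]$; $Y^{rl}_{ii}=0$ for all $i\in[n]$, $r,l\in[k]$, $r\ne l$; $Y\ge0$ entrywise; and $\begin{bmatrix}1&\mathrm{diag}(Y)^{\top}\\ \mathrm{diag}(Y)&Y\end{bmatrix}\succeq0$. Then $\sum_{r\in[k]}Y^{rr}_{ii}\le 1$ for every $i\in[n]$.
   Context: $\mathbb S^m$ denotes real symmetric $m\times m$ matrices; $\mathrm{diag}(Y)$ is the vector of diagonal entries; $\succeq0$ is positive semidefiniteness. *)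

theory Defs
  imports "HOL-Analysis.Analysis"
begin

definition sym_mat :: "real^'a^'a \<Rightarrow> bool" where
  "sym_mat M \<longleftrightarrow> transpose M = M"

definition psd :: "real^'a^'a \<Rightarrow> bool" where
  "psd M \<longleftrightarrow> sym_mat M \<and> (\<forall>x. 0 \<le> x \<bullet> (M *v x))"

text \<open>The bordered matrix [1, diag(Y)^T; diag(Y), Y], index None is the extra row/column.\<close>
definition bordered :: "real^'a^'a \<Rightarrow> real^('a option)^('a option)" where
  "bordered Y = (\<chi> p q. case (p, q) of
      (None, None) \<Rightarrow> 1
    | (None, Some b) \<Rightarrow> Y $ b $ b
    | (Some a, None) \<Rightarrow> Y $ a $ a
    | (Some a, Some b) \<Rightarrow> Y $ a $ b)"

end

theory Submission
  imports Defs
begin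

(* Positive semidefiniteness of the bordered matrix means, via the Schur complement, that
   Y - diag(Y) diag(Y)^T is positive semidefinite: (diag(Y) . u)^2 <= u . Y u for every u.
   Take for u the indicator of the k copies (r, i) of vertex i. Then diag(Y) . u is
   S = sum_r Y^rr_ii, and so is u . Y u, because the entries Y^rl_ii with r <> l vanish.
   Hence S^2 <= S, i.e. S <= 1. *)

definition diag_vec :: "real^'a^'a \<Rightarrow> real^'a" where
  "diag_vec Y = (\<chi> a. Y $ a $ a)"

definition border_vec :: "real \<Rightarrow> real^'a \<Rightarrow> real^('a option)" where
  "border_vec t u = (\<chi> p. case p of None \<Rightarrow> t | Some a \<Rightarrow> u $ a)"

lemma sum_UNIV_option:
  fixes f :: "'a::finite option \<Rightarrow> 'b::comm_monoid_add"
  shows "(\<Sum>p\<in>UNIV. f p) = f None + (\<Sum>a\<in>UNIV. f (Some a))"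
  by (simp add: UNIV_option_conv sum.reindex)

lemma sum_UNIV_prod_mult_indicator_snd:
  fixes f :: "'a::finite \<times> 'b::finite \<Rightarrow> 'c::semiring_1"
  shows "(\<Sum>p\<in>UNIV. f p * (if snd p = i then 1 else 0)) = (\<Sum>a\<in>UNIV. f (a, i))"
proof -
  have "(\<Sum>p\<in>UNIV. f p * (if snd p = i then 1 else 0))
      = (\<Sum>a\<in>UNIV. \<Sum>b\<in>UNIV. f (a, b) * (if b = i then 1 else 0))"
    unfolding sum.cartesian_product by (simp add: case_prod_beta')
  also have "\<dots> = (\<Sum>a\<in>UNIV. f (a, i))"
    by (simp add: if_distrib[of "times _"] cong: if_cong)
  finally show ?thesis .
qed

lemma inner_border_vec: "border_vec s v \<bullet> border_vec t u = s * t + v \<bullet> u"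
  by (simp add: inner_vec_def sum_UNIV_option border_vec_def)

lemma bordered_mult_border_vec:
  "bordered Y *v border_vec t u
     = border_vec (t + diag_vec Y \<bullet> u) (t *s diag_vec Y + Y *v u)"
  by (simp add: vec_eq_iff matrix_vector_mult_def sum_UNIV_option bordered_def border_vec_def
      diag_vec_def inner_vec_def split: option.split)

lemma quadratic_form_bordered:
  "border_vec t u \<bullet> (bordered Y *v border_vec t u)
     = t\<^sup>2 + 2 * t * (diag_vec Y \<bullet> u) + u \<bullet> (Y *v u)"
  by (simp add: bordered_mult_border_vec inner_border_vec inner_add_right
      inner_commute[of u "diag_vec Y"] scalar_mult_eq_scaleR power2_eq_square algebra_simps)

lemma psd_bordered_diag_inner_le:
  assumes "psd (bordered Y)"
  shows "(diag_vec Y \<bullet> u)\<^sup>2 \<le> u \<bullet> (Y *v u)"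
proof -
  define x where "x = border_vec (- (diag_vec Y \<bullet> u)) u"
  have "0 \<le> x \<bullet> (bordered Y *v x)"
    using assms unfolding psd_def by blast
  then show ?thesis
    by (simp add: x_def quadratic_form_bordered power2_eq_square)
qed

definition snd_indicator :: "'b::finite \<Rightarrow> real^('a::finite \<times> 'b)" where
  "snd_indicator i = (\<chi> p. if snd p = i then 1 else 0)"

lemma diag_vec_inner_snd_indicator:
  fixes Y :: "real^('a::finite \<times> 'b::finite)^('a \<times> 'b)"
  shows "diag_vec Y \<bullet> snd_indicator i = (\<Sum>r\<in>UNIV. Y $ (r, i) $ (r, i))"
  by (simp add: snd_indicator_def diag_vec_def inner_vec_def sum_UNIV_prod_mult_indicator_snd)

lemma quadratic_form_snd_indicator:
  fixes Y :: "real^('a::finite \<times> 'b::finite)^('a \<times> 'b)"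
  assumes "\<And>r l. r \<noteq> l \<Longrightarrow> Y $ (r, i) $ (l, i) = 0"
  shows "snd_indicator i \<bullet> (Y *v snd_indicator i) = (\<Sum>r\<in>UNIV. Y $ (r, i) $ (r, i))"
proof -
  have "(Y *v snd_indicator i) $ (r, i) = Y $ (r, i) $ (r, i)" for r
  proof -
    have "(Y *v snd_indicator i) $ (r, i) = (\<Sum>l\<in>UNIV. Y $ (r, i) $ (l, i))"
      by (simp add: snd_indicator_def matrix_vector_mult_def sum_UNIV_prod_mult_indicator_snd)
    also have "\<dots> = (\<Sum>l\<in>UNIV. if l = r then Y $ (r, i) $ (r, i) else 0)"
      by (rule sum.cong) (auto simp: assms)
    finally show ?thesis by simp
  qed
  then show ?thesis
    unfolding inner_commute[of "snd_indicator i"]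
    by (simp add: snd_indicator_def inner_vec_def sum_UNIV_prod_mult_indicator_snd)
qed

theorem lemma1:
  fixes E :: "'n::finite \<Rightarrow> 'n \<Rightarrow> bool"
    and Y :: "real^('k::finite \<times> 'n)^('k \<times> 'n)"
  assumes E_sym: "\<And>i j. E i j \<Longrightarrow> E j i"
    and E_irrefl: "\<And>i. \<not> E i i"
    and Y_sym: "sym_mat Y"
    and edge: "\<And>i j r. E i j \<Longrightarrow> Y $ (r, i) $ (r, j) = 0"
    and offdiag: "\<And>i r l. r \<noteq> l \<Longrightarrow> Y $ (r, i) $ (l, i) = 0"
    and nonneg: "\<And>p q. 0 \<le> Y $ p $ q"
    and psd: "psd (bordered Y)"
  shows "\<forall>i. (\<Sum>r\<in>UNIV. Y $ (r, i) $ (r, i)) \<le> 1"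
proof
  fix i :: 'n
  define S where "S = (\<Sum>r\<in>UNIV. Y $ (r, i) $ (r, i))"
  have "S\<^sup>2 \<le> S"
    using psd_bordered_diag_inner_le[OF psd, of "snd_indicator i"]
    by (simp add: S_def diag_vec_inner_snd_indicator quadratic_form_snd_indicator offdiag)
  then show "S \<le> 1"
    by (auto simp: power2_eq_square mult_le_cancel_left2)
qed

end
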